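(* Let $p\ge2$ and $x_0\in\mathcal C_0$. There exist admissible constants $c,C_{6.6}>0$ such that, whenever $h<c$, $\delta^2<h$, $M^{-2/d}<h$ and $\rho\ge1$, $$\sum_{i=0}^{N-1}\mathbb E\big[\mathbf 1_{\{t_{i+1}<\tau_\infty\}}|X_{t_{i+1}}-X_{t_{i+1}^-}|^2\big]\le C_{6.6}\,h\big(\mathcal E^2(\mathrm{space})+\mathcal E^2(\mathrm{quantiz})\big),$$ where $X_{t_{i+1}^-}$ is the left limit at $t_{i+1}$ of the time-continuous extension defined below.
   Context: Standing setting. Fix $d\in\mathbb N^*$, $T>0$ and functions $b:\mathbb R^d\times\mathbb R\times\mathbb R^d\to\mathbb R^d$, $f:\mathbb R^d\times\mathbb R\times\mathbb R^d\to\mathbb R$, $\sigma:\mathbb R^d\times\mathbb R\to\mathbb R^{d\times d}$, $H:\mathbb R^d\to\mathbb R$ satisfying Assumption (A): $b,f,\sigma,H$ are uniformly Lipschitz continuous in all variables; $b,f,\sigma$ are bounded in the space variable $x$ and have at most linear growth in the other variables, i.e. $|b(x,y,z)|+|f(x,y,z)|+|\sigma(x,y)|\le\Lambda(1+|y|+|z|)$; $a=\sigma\sigma^*$ is uniformly elliptic; and $H$ is bounded in $C^{2+\alpha}(\mathbb R^d)$ for some $\alpha\in(0,1)$. Let $(\Omega,\mathcal F,\mathbb P)$ carry a $d$-dimensional Brownian motion $B$ with augmented natural filtration $(\mathcal F_t)$. Discretization: $N\in\mathbb N^*$, $h=T/N$, $t_k=kh$, $\Delta B^k=B_{t_{k+1}}-B_{t_k}$.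 Quantization: $M\in\mathbb N^*$, a grid $\Lambda(M)=\{y_1,\dots,y_M\}\subset\mathbb R^d$ with nearest-neighbour projection $G_{\Lambda(M)}$, and $g(\Delta B^k):=h^{1/2}G_{\Lambda(M)}(h^{-1/2}\Delta B^k)$; it is assumed that for every $q\ge1$ there is $C_{\rm Quantiz}(q,d)$ with $\mathbb E[|g(\Delta B^k)-\Delta B^k|^q]^{1/q}\le C_{\rm Quantiz}(q,d)h^{1/2}M^{-1/d}$. Spatial grids: $\delta>0$, $\mathcal C_\infty=\delta\mathbb Z^d$, $\Pi_\infty(x)$ the point with coordinates $\delta\lfloor\delta^{-1}x_j+1/2\rfloor$; $R>0$, $\rho\ge1$, $r_0=R$, $r_i=R+\rho$ for $1\le i\le N$; $\Delta_i=\{x\in\mathbb R^d:-\delta\lfloor r_i/\delta\rfloor-\delta/2\le x_j<\delta\lfloor r_i/\delta\rfloor+\delta/2,\ j=1,\dots,d\}$, $\mathcal C_i=\mathcal C_\infty\cap\Delta_i$; $\mathcal Q(r,y)=\big((y_j\vee(-\delta\lfloor r/\delta\rfloor))\wedge\delta\lfloor r/\delta\rfloor\big)_{1\le j\le d}$; $\Pi_i(x)=\mathcal Q(r_i,\Pi_\infty(x))$ (so $\Pi_i(x)=\Pi_\infty(x)$ for $x\in\Delta_i$). Algorithm: for $x\in\mathcal C_N$, $\bar u(T,x)=H(x)$, $\bar v(T,x)=\nabla_xH(x)\sigma(x,H(x))$; for $k=N-1,\dots,0$ and $x\in\mathcal C_k$: $\mathcal T^0(t_k,x)=\sigma(x,\bar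 u(t_{k+1},x))g(\Delta B^k)$; $\hat v(t_k,x)=\mathbb E[\bar v(t_{k+1},\Pi_{k+1}(x+\mathcal T^0(t_k,x)))]$; $\mathcal T(t_k,x)=b(x,\bar u(t_{k+1},x),\hat v(t_k,x))h+\sigma(x,\bar u(t_{k+1},x))g(\Delta B^k)$; $\bar v(t_k,x)=h^{-1}\mathbb E[\bar u(t_{k+1},\Pi_{k+1}(x+\mathcal T(t_k,x)))g(\Delta B^k)]$; $\bar u(t_k,x)=\mathbb E[\bar u(t_{k+1},\Pi_{k+1}(x+\mathcal T(t_k,x)))]+f(x,\bar u(t_{k+1},x),\bar v(t_k,x))h$. Discrete processes: for $x_0\in\mathcal C_0$, $X_0=x_0$ and $X_{t_{k+1}}=\Pi_{k+1}(X_{t_k}+\mathcal T(t_k,X_{t_k}))$, where in $\mathcal T(t_k,X_{t_k})$ the random variable $g(\Delta B^k)$ is the quantized actual increment; $\tau_\infty=\inf\{t_k,1\le k\le N: X_{t_{k-1}}+\mathcal T(t_{k-1},X_{t_{k-1}})\notin\Delta_k\}$, $\inf\emptyset=+\infty$. Time-continuous extension: for $k\in\{0,\dots,N-1\}$ and $t\in[t_k,t_{k+1})$, $X_t=X_{t_k}+b(X_{t_k},\bar u(t_{k+1},X_{t_k}),\hat v(t_k,X_{t_k}))(t-t_k)+\sigma(X_{t_k},\bar u(t_{k+1},X_{t_k}))(B_t-B_{t_k})$. Error terms: $\mathcal E(\mathrm{space})=h^{-1}\delta$, $\mathcal E(\mathrm{quantiz})=h^{-1/2}M^{-1/d}$.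 A constant is called admissible if it depends only on $p$, $T$, $d$, the constants in Assumption (A) and the constants $C_{\rm Quantiz}(\cdot,d)$ (not on $h,\delta,M,R,\rho$, the starting point or the time index). *)

theory Defs
  imports "HOL-Probability.Probability"
begin

definition brownian_motion :: "'a measure \<Rightarrow> (real \<Rightarrow> 'a \<Rightarrow> real^'d) \<Rightarrow> bool" where
  "brownian_motion P B \<longleftrightarrow>
     prob_space P \<and>
     (\<forall>t\<ge>0. B t \<in> borel_measurable P) \<and>
     (\<forall>\<omega>\<in>space P. B 0 \<omega> = 0 \<and> continuous_on {0..} (\<lambda>t. B t \<omega>)) \<and>
     (\<forall>(ts::nat \<Rightarrow> real) (n::nat). 0 \<le> ts 0 \<and> (\<forall>i<n. ts i < ts (Suc i)) \<longrightarrow>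
        prob_space.indep_vars P (\<lambda>_. borel)
          (\<lambda>(i, j) \<omega>. (B (ts (Suc i)) \<omega> - B (ts i) \<omega>) $ j) ({..<n} \<times> (UNIV :: 'd set)) \<and>
        (\<forall>i<n. \<forall>j. distributed P lborel (\<lambda>\<omega>. (B (ts (Suc i)) \<omega> - B (ts i) \<omega>) $ j)
                       (\<lambda>x. ennreal (normal_density 0 (sqrt (ts (Suc i) - ts i)) x))))"

definition Pi_inf :: "real \<Rightarrow> real^'d \<Rightarrow> real^'d" where
  "Pi_inf \<delta> x = (\<chi> j. \<delta> * of_int \<lfloor>x $ j / \<delta> + 1/2\<rfloor>)"

definition radius :: "real \<Rightarrow> real \<Rightarrow> nat \<Rightarrow> real" where
  "radius R \<rho> i = (if i = 0 then R else R + \<rho>)"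

definition clampQ :: "real \<Rightarrow> real \<Rightarrow> real^'d \<Rightarrow> real^'d" where
  "clampQ \<delta> r y = (\<chi> j. min (max (y $ j) (- (\<delta> * of_int \<lfloor>r / \<delta>\<rfloor>))) (\<delta> * of_int \<lfloor>r / \<delta>\<rfloor>))"

definition Pi_i :: "real \<Rightarrow> real \<Rightarrow> real \<Rightarrow> nat \<Rightarrow> real^'d \<Rightarrow> real^'d" where
  "Pi_i \<delta> R \<rho> i x = clampQ \<delta> (radius R \<rho> i) (Pi_inf \<delta> x)"

definition Delta_i :: "real \<Rightarrow> real \<Rightarrow> real \<Rightarrow> nat \<Rightarrow> (real^'d) set" where
  "Delta_i \<delta> R \<rho> i = {x. \<forall>j.
      - \<delta> * of_int \<lfloor>radius R \<rho> i / \<delta>\<rfloor> - \<delta>/2 \<le> x $ j \<and>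
      x $ j < \<delta> * of_int \<lfloor>radius R \<rho> i / \<delta>\<rfloor> + \<delta>/2}"

definition C_inf :: "real \<Rightarrow> (real^'d) set" where
  "C_inf \<delta> = {x. \<forall>j. \<exists>m::int. x $ j = \<delta> * of_int m}"

definition C_i :: "real \<Rightarrow> real \<Rightarrow> real \<Rightarrow> nat \<Rightarrow> (real^'d) set" where
  "C_i \<delta> R \<rho> i = C_inf \<delta> \<inter> Delta_i \<delta> R \<rho> i"

definition tgrid :: "real \<Rightarrow> nat \<Rightarrow> nat \<Rightarrow> real" where
  "tgrid T N k = real k * (T / real N)"

definition dB :: "(real \<Rightarrow> 'a \<Rightarrow> real^'d) \<Rightarrow> real \<Rightarrow> nat \<Rightarrow> nat \<Rightarrow> 'a \<Rightarrow> real^'d" where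
  "dB B T N k \<omega> = B (tgrid T N (Suc k)) \<omega> - B (tgrid T N k) \<omega>"

definition gq :: "(real^'d \<Rightarrow> real^'d) \<Rightarrow> real \<Rightarrow> real^'d \<Rightarrow> real^'d" where
  "gq G h y = sqrt h *\<^sub>R G ((1 / sqrt h) *\<^sub>R y)"

definition gB :: "(real^'d \<Rightarrow> real^'d) \<Rightarrow> (real \<Rightarrow> 'a \<Rightarrow> real^'d) \<Rightarrow> real \<Rightarrow> nat \<Rightarrow> nat \<Rightarrow> 'a \<Rightarrow> real^'d" where
  "gB G B T N k \<omega> = gq G (T / real N) (dB B T N k \<omega>)"

definition nearest_proj :: "(real^'d) set \<Rightarrow> (real^'d \<Rightarrow> real^'d) \<Rightarrow> bool" where
  "nearest_proj Lam G \<longleftrightarrow> (\<forall>y. G y \<in> Lam \<and> (\<forall>z\<in>Lam. dist y (G y) \<le> dist y z))"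

text \<open>One backward step: from (u(t_{k+1},.), v(t_{k+1},.)) compute hat v(t_k,.)\<close>
definition vhat_step ::
  "(real^'d \<Rightarrow> real \<Rightarrow> real^'d^'d) \<Rightarrow> 'a measure \<Rightarrow> (real \<Rightarrow> 'a \<Rightarrow> real^'d) \<Rightarrow>
   (real^'d \<Rightarrow> real^'d) \<Rightarrow> real \<Rightarrow> nat \<Rightarrow> real \<Rightarrow> real \<Rightarrow> real \<Rightarrow> nat \<Rightarrow>
   (real^'d \<Rightarrow> real \<times> (real^'d)) \<Rightarrow> real^'d \<Rightarrow> real^'d" where
  "vhat_step \<sigma> P B G T N \<delta> R \<rho> k uv x =
     (\<integral>\<omega>. snd (uv (Pi_i \<delta> R \<rho> (Suc k) (x + \<sigma> x (fst (uv x)) *v gB G B T N k \<omega>))) \<partial>P)"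

text \<open>The transition T(t_k,x) evaluated at the sample \<omega> (for given u(t_{k+1},.) and hat v(t_k,x))\<close>
definition trans ::
  "(real^'d \<Rightarrow> real \<Rightarrow> real^'d \<Rightarrow> real^'d) \<Rightarrow> (real^'d \<Rightarrow> real \<Rightarrow> real^'d^'d) \<Rightarrow>
   (real \<Rightarrow> 'a \<Rightarrow> real^'d) \<Rightarrow> (real^'d \<Rightarrow> real^'d) \<Rightarrow> real \<Rightarrow> nat \<Rightarrow> nat \<Rightarrow>
   real \<Rightarrow> real^'d \<Rightarrow> real^'d \<Rightarrow> 'a \<Rightarrow> real^'d" where
  "trans b \<sigma> B G T N k u vh x \<omega> =
     (T / real N) *\<^sub>R b x u vh + \<sigma> x u *v gB G B T N k \<omega>"

definition uv_step ::
  "(real^'d \<Rightarrow> real \<Rightarrow> real^'d \<Rightarrow> real^'d) \<Rightarrow> (real^'d \<Rightarrow> real \<Rightarrow> real^'d \<Rightarrow> real) \<Rightarrow>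
   (real^'d \<Rightarrow> real \<Rightarrow> real^'d^'d) \<Rightarrow> 'a measure \<Rightarrow> (real \<Rightarrow> 'a \<Rightarrow> real^'d) \<Rightarrow>
   (real^'d \<Rightarrow> real^'d) \<Rightarrow> real \<Rightarrow> nat \<Rightarrow> real \<Rightarrow> real \<Rightarrow> real \<Rightarrow> nat \<Rightarrow>
   (real^'d \<Rightarrow> real \<times> (real^'d)) \<Rightarrow> real^'d \<Rightarrow> real \<times> (real^'d)" where
  "uv_step b f \<sigma> P B G T N \<delta> R \<rho> k uv x =
     (let h = T / real N;
          u1 = fst (uv x);
          vh = vhat_step \<sigma> P B G T N \<delta> R \<rho> k uv x;
          nxt = (\<lambda>\<omega>. fst (uv (Pi_i \<delta> R \<rho> (Suc k) (x + trans b \<sigma> B G T N k u1 vh x \<omega>))));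
          vb = (1 / h) *\<^sub>R (\<integral>\<omega>. nxt \<omega> *\<^sub>R gB G B T N k \<omega> \<partial>P);
          ub = (\<integral>\<omega>. nxt \<omega> \<partial>P) + f x u1 vb * h
      in (ub, vb))"

text \<open>uvj j = (bar u(t_{N-j},.), bar v(t_{N-j},.))\<close>
fun uvj ::
  "(real^'d \<Rightarrow> real \<Rightarrow> real^'d \<Rightarrow> real^'d) \<Rightarrow> (real^'d \<Rightarrow> real \<Rightarrow> real^'d \<Rightarrow> real) \<Rightarrow>
   (real^'d \<Rightarrow> real \<Rightarrow> real^'d^'d) \<Rightarrow> (real^'d \<Rightarrow> real) \<Rightarrow> (real^'d \<Rightarrow> real^'d) \<Rightarrow>
   'a measure \<Rightarrow> (real \<Rightarrow> 'a \<Rightarrow> real^'d) \<Rightarrow>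
   (real^'d \<Rightarrow> real^'d) \<Rightarrow> real \<Rightarrow> nat \<Rightarrow> real \<Rightarrow> real \<Rightarrow> real \<Rightarrow> nat \<Rightarrow>
   real^'d \<Rightarrow> real \<times> (real^'d)" where
  "uvj b f \<sigma> H DH P B G T N \<delta> R \<rho> 0 = (\<lambda>x. (H x, DH x v* \<sigma> x (H x)))"
| "uvj b f \<sigma> H DH P B G T N \<delta> R \<rho> (Suc j) =
     uv_step b f \<sigma> P B G T N \<delta> R \<rho> (N - Suc j) (uvj b f \<sigma> H DH P B G T N \<delta> R \<rho> j)"

definition ubar where
  "ubar b f \<sigma> H DH P B G T N \<delta> R \<rho> k x = fst (uvj b f \<sigma> H DH P B G T N \<delta> R \<rho> (N - k) x)"

definition vhat where
  "vhat b f \<sigma> H DH P B G T N \<delta> R \<rho> k x =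
     vhat_step \<sigma> P B G T N \<delta> R \<rho> k (uvj b f \<sigma> H DH P B G T N \<delta> R \<rho> (N - Suc k)) x"

definition Xstep where
  "Xstep b f \<sigma> H DH P B G T N \<delta> R \<rho> k X \<omega> =
      X + trans b \<sigma> B G T N k (ubar b f \<sigma> H DH P B G T N \<delta> R \<rho> (Suc k) X)
            (vhat b f \<sigma> H DH P B G T N \<delta> R \<rho> k X) X \<omega>"

fun Xd where
  "Xd b f \<sigma> H DH P B G T N \<delta> R \<rho> x0 0 \<omega> = x0"
| "Xd b f \<sigma> H DH P B G T N \<delta> R \<rho> x0 (Suc k) \<omega> =
     Pi_i \<delta> R \<rho> (Suc k) (Xstep b f \<sigma> H DH P B G T N \<delta> R \<rho> k (Xd b f \<sigma> H DH P B G T N \<delta> R \<rho> x0 k \<omega>) \<omega>)"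

text \<open>tau_infinity (value +infinity if the set is empty)\<close>
definition tau_inf where
  "tau_inf b f \<sigma> H DH P B G T N \<delta> R \<rho> x0 \<omega> =
     Inf {ereal (tgrid T N k) | k. 1 \<le> k \<and> k \<le> N \<and>
            Xstep b f \<sigma> H DH P B G T N \<delta> R \<rho> (k - 1) (Xd b f \<sigma> H DH P B G T N \<delta> R \<rho> x0 (k - 1) \<omega>) \<omega>
              \<notin> Delta_i \<delta> R \<rho> k}"

definition Xc where
  "Xc b f \<sigma> H DH P B G T N \<delta> R \<rho> x0 t \<omega> =
     (let h = T / real N; k = nat \<lfloor>t / h\<rfloor>;
          X = Xd b f \<sigma> H DH P B G T N \<delta> R \<rho> x0 k \<omega>;
          u = ubar b f \<sigma> H DH P B G T N \<delta> R \<rho> (Suc k) X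
      in X + (t - tgrid T N k) *\<^sub>R b X u (vhat b f \<sigma> H DH P B G T N \<delta> R \<rho> k X)
           + \<sigma> X u *v (B t \<omega> - B (tgrid T N k) \<omega>))"

definition Xleft where
  "Xleft b f \<sigma> H DH P B G T N \<delta> R \<rho> x0 t \<omega> =
     Lim (at_left t) (\<lambda>s. Xc b f \<sigma> H DH P B G T N \<delta> R \<rho> x0 s \<omega>)"

text \<open>The jump sum of Lemma 6.6 (expectations as nonnegative integrals)\<close>
definition jump_sum where
  "jump_sum b f \<sigma> H DH P B G T N \<delta> R \<rho> x0 =
     (\<Sum>i<N. \<integral>\<^sup>+\<omega>. ennreal
        (indicator {\<omega>. ereal (tgrid T N (Suc i)) < tau_inf b f \<sigma> H DH P B G T N \<delta> R \<rho> x0 \<omega>} \<omega> *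
         (norm (Xd b f \<sigma> H DH P B G T N \<delta> R \<rho> x0 (Suc i) \<omega>
                - Xleft b f \<sigma> H DH P B G T N \<delta> R \<rho> x0 (tgrid T N (Suc i)) \<omega>))\<^sup>2) \<partial>P)"

definition assumption_A where
  "assumption_A L Lam lam K \<alpha> b f \<sigma> H DH \<longleftrightarrow>
    (\<forall>x y z x' y' z'.
        norm (b x y z - b x' y' z') \<le> L * (norm (x - x') + \<bar>y - y'\<bar> + norm (z - z')) \<and>
        \<bar>f x y z - f x' y' z'\<bar> \<le> L * (norm (x - x') + \<bar>y - y'\<bar> + norm (z - z'))) \<and>
    (\<forall>x y x' y'. norm (\<sigma> x y - \<sigma> x' y') \<le> L * (norm (x - x') + \<bar>y - y'\<bar>)) \<and>
    (\<forall>x x'. \<bar>H x - H x'\<bar> \<le> L * norm (x - x')) \<and>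
    (\<forall>x y z. norm (b x y z) + \<bar>f x y z\<bar> + norm (\<sigma> x y) \<le> Lam * (1 + \<bar>y\<bar> + norm z)) \<and>
    (\<forall>x y \<xi>. \<xi> \<bullet> ((\<sigma> x y ** transpose (\<sigma> x y)) *v \<xi>) \<ge> lam * (norm \<xi>)\<^sup>2) \<and>
    (\<exists>D2H :: real^'d \<Rightarrow> real^'d^'d.
       (\<forall>x. (H has_derivative (\<lambda>v. DH x \<bullet> v)) (at x)) \<and>
       (\<forall>x. (DH has_derivative (\<lambda>v. D2H x *v v)) (at x)) \<and>
       (\<forall>x. \<bar>H x\<bar> \<le> K \<and> norm (DH x) \<le> K \<and> norm (D2H x) \<le> K) \<and>
       (\<forall>x x'. norm (D2H x - D2H x') \<le> K * (norm (x - x')) powr \<alpha>))"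

end

theory Submission
  imports Defs
begin

(*
  Between two grid times the interpolated process follows the Euler step driven by the true
  Brownian increment, whereas X at t_{i+1} is the projection of the Euler step Y driven by the
  quantized increment g.  Hence the jump at t_{i+1} equals (Pi(Y) - Y) + \<sigma>(X_{t_i}, u) (g - \<Delta>B),
  with u = ubar(t_{i+1}, X_{t_i}).  Before the exit time Y lies in the cell \<Delta>_{i+1}, so the
  projection moves it by O(\<delta>); and |\<sigma>| \<le> \<Lambda> (1 + |u|), so the second term is controlled by the
  L^2 quantization error O(h^(1/2) M^(-1/d)) once ubar is bounded uniformly.  Summing the N = T/h
  squared bounds gives C h (E(space)^2 + E(quantiz)^2).

  The uniform bound on ubar is a discrete Gronwall argument: one backward step grows the bound by a
  factor 1 + O(h), because g is a small L^1/L^2 perturbation of a centred Gaussian increment, so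
  E[\<beta> \<bullet> g] and E[(\<beta> \<bullet> g)^2] are O(h).
*)

lemma norm_matrix_vector_mult_le:
  fixes A :: "real^'n^'m"
  shows "norm (A *v v) \<le> norm A * norm v"
proof -
  have "norm (A *v v) = L2_set (\<lambda>i. norm ((A *v v) $ i)) UNIV" by (rule norm_vec_def)
  also have "\<dots> \<le> L2_set (\<lambda>i. norm (A $ i) * norm v) UNIV"
    by (rule L2_set_mono) (auto simp: matrix_mult_dot Cauchy_Schwarz_ineq2)
  also have "\<dots> = norm A * norm v"
    by (simp add: norm_vec_def[of A] L2_set_left_distrib)
  finally show ?thesis .
qed

lemma power2_add_le: "(a + b)\<^sup>2 \<le> 2 * a\<^sup>2 + 2 * b\<^sup>2" for a b :: real
  using zero_le_power2[of "a - b"] by (simp add: power2_eq_square algebra_simps)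

lemma integral_norm_power2_le_sum:
  fixes g w :: "'a \<Rightarrow> 'v::euclidean_space"
  assumes "prob_space P" "g \<in> borel_measurable P" "w \<in> borel_measurable P"
    and "integrable P (\<lambda>\<omega>. (norm (w \<omega>))\<^sup>2)" "integrable P (\<lambda>\<omega>. (norm (g \<omega> - w \<omega>))\<^sup>2)"
  shows "integrable P (\<lambda>\<omega>. (norm (g \<omega>))\<^sup>2)"
    and "(\<integral>\<omega>. (norm (g \<omega>))\<^sup>2 \<partial>P)
           \<le> 2 * (\<integral>\<omega>. (norm (w \<omega>))\<^sup>2 \<partial>P) + 2 * (\<integral>\<omega>. (norm (g \<omega> - w \<omega>))\<^sup>2 \<partial>P)"
proof -
  have pointwise: "(norm (g \<omega>))\<^sup>2 \<le> 2 * (norm (w \<omega>))\<^sup>2 + 2 * (norm (g \<omega> - w \<omega>))\<^sup>2" for \<omega>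
  proof -
    have "norm (g \<omega>) \<le> norm (w \<omega>) + norm (g \<omega> - w \<omega>)" by (rule norm_triangle_sub)
    then have "(norm (g \<omega>))\<^sup>2 \<le> (norm (w \<omega>) + norm (g \<omega> - w \<omega>))\<^sup>2" by (simp add: power_mono)
    also have "\<dots> \<le> 2 * (norm (w \<omega>))\<^sup>2 + 2 * (norm (g \<omega> - w \<omega>))\<^sup>2"
      by (rule power2_add_le)
    finally show ?thesis .
  qed
  have bound: "integrable P (\<lambda>\<omega>. 2 * (norm (w \<omega>))\<^sup>2 + 2 * (norm (g \<omega> - w \<omega>))\<^sup>2)"
    using assms by auto
  show int: "integrable P (\<lambda>\<omega>. (norm (g \<omega>))\<^sup>2)"
    by (rule Bochner_Integration.integrable_bound[OF bound]) (use assms pointwise in \<open>auto\<close>)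
  show "(\<integral>\<omega>. (norm (g \<omega>))\<^sup>2 \<partial>P)
           \<le> 2 * (\<integral>\<omega>. (norm (w \<omega>))\<^sup>2 \<partial>P) + 2 * (\<integral>\<omega>. (norm (g \<omega> - w \<omega>))\<^sup>2 \<partial>P)"
    using integral_mono[OF int bound pointwise] assms by simp
qed

lemma integral_inner_perturbation_le:
  fixes g w :: "'a \<Rightarrow> 'v::euclidean_space"
  assumes "integrable P w" "integral\<^sup>L P w = 0"
    and "g \<in> borel_measurable P" "integrable P (\<lambda>\<omega>. norm (g \<omega> - w \<omega>))"
  shows "integrable P g"
    and "\<bar>\<integral>\<omega>. \<beta> \<bullet> g \<omega> \<partial>P\<bar> \<le> norm \<beta> * (\<integral>\<omega>. norm (g \<omega> - w \<omega>) \<partial>P)"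
proof -
  have diff: "integrable P (\<lambda>\<omega>. g \<omega> - w \<omega>)"
    using assms by (subst integrable_norm_iff[symmetric]) auto
  show int: "integrable P g"
    using Bochner_Integration.integrable_add[OF assms(1) diff] by simp
  have "(\<integral>\<omega>. \<beta> \<bullet> g \<omega> \<partial>P) = (\<integral>\<omega>. \<beta> \<bullet> (g \<omega> - w \<omega>) \<partial>P)"
    using int assms(1,2) diff by (simp add: inner_diff_right)
  also have "\<bar>\<dots>\<bar> \<le> (\<integral>\<omega>. norm \<beta> * norm (g \<omega> - w \<omega>) \<partial>P)"
    using diff assms(4) by (intro integral_abs_bound[THEN order_trans] integral_mono)
      (auto simp: Cauchy_Schwarz_ineq2)
  finally show "\<bar>\<integral>\<omega>. \<beta> \<bullet> g \<omega> \<partial>P\<bar> \<le> norm \<beta> * (\<integral>\<omega>. norm (g \<omega> - w \<omega>) \<partial>P)"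
    by simp
qed

lemma one_plus_power_le_exp: "0 \<le> x \<Longrightarrow> (1 + x) ^ n \<le> exp (real n * x)" for x :: real
  by (metis exp_ge_add_one_self exp_of_nat_mult power_mono add_nonneg_nonneg zero_le_one)

lemma abs_one_plus_le: "\<bar>1 + y\<bar> \<le> 1 + y + 2 * y\<^sup>2" for y :: real
proof -
  have "0 \<le> (y + 1/2)\<^sup>2" by simp
  then have "0 \<le> y\<^sup>2 + y + 1" by (simp add: power2_eq_square algebra_simps)
  then show ?thesis by (cases "0 \<le> 1 + y") auto
qed

lemma integrable_bounded_scaleR:
  fixes g :: "'a \<Rightarrow> 'v::{banach, second_countable_topology}"
  assumes "integrable P g" "Y \<in> borel_measurable P" "\<And>\<omega>. \<bar>Y \<omega>\<bar> \<le> A"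
  shows "integrable P (\<lambda>\<omega>. Y \<omega> *\<^sub>R g \<omega>)"
proof (rule Bochner_Integration.integrable_bound[of _ "\<lambda>\<omega>. A * norm (g \<omega>)"])
  have "0 \<le> A" using assms(3) order_trans abs_ge_zero by blast
  then show "AE \<omega> in P. norm (Y \<omega> *\<^sub>R g \<omega>) \<le> norm (A * norm (g \<omega>))"
    using assms(3) by (auto intro!: mult_right_mono)
qed (use assms in auto)

lemma integral_bounded_mult_one_plus_inner_le:
  fixes g :: "'a \<Rightarrow> 'v::euclidean_space" and Y :: "'a \<Rightarrow> real"
  assumes "prob_space P"
    and g: "g \<in> borel_measurable P" "integrable P g"
      "integrable P (\<lambda>\<omega>. (norm (g \<omega>))\<^sup>2)" "(\<integral>\<omega>. (norm (g \<omega>))\<^sup>2 \<partial>P) \<le> S"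
      "\<bar>\<integral>\<omega>. \<beta> \<bullet> g \<omega> \<partial>P\<bar> \<le> norm \<beta> * e"
    and Y: "Y \<in> borel_measurable P" "\<And>\<omega>. \<bar>Y \<omega>\<bar> \<le> A"
    and \<beta>: "norm \<beta> \<le> L" and e: "0 \<le> e"
  shows "\<bar>\<integral>\<omega>. Y \<omega> * (1 + \<beta> \<bullet> g \<omega>) \<partial>P\<bar> \<le> A * (1 + L * e + 2 * L\<^sup>2 * S)"
proof -
  interpret prob_space P by fact
  have A: "0 \<le> A" using Y(2) order_trans abs_ge_zero by blast
  have [measurable]: "g \<in> borel_measurable P" "Y \<in> borel_measurable P" using g Y by auto
  define y where "y = (\<lambda>\<omega>. \<beta> \<bullet> g \<omega>)"
  have int_y: "integrable P y" "integrable P (\<lambda>\<omega>. Y \<omega> * (1 + y \<omega>))"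
    using g(2) integrable_bounded_scaleR[of P "\<lambda>\<omega>. 1 + y \<omega>", OF _ Y] by (auto simp: y_def)
  have y_sq: "(y \<omega>)\<^sup>2 \<le> L\<^sup>2 * (norm (g \<omega>))\<^sup>2" for \<omega>
  proof -
    have "\<bar>y \<omega>\<bar> \<le> L * norm (g \<omega>)"
      unfolding y_def using Cauchy_Schwarz_ineq2[of \<beta> "g \<omega>"] \<beta> by (metis mult_right_mono norm_ge_zero order_trans)
    then show ?thesis by (metis abs_ge_zero power2_abs power_mono power_mult_distrib)
  qed
  have "\<bar>\<integral>\<omega>. Y \<omega> * (1 + y \<omega>) \<partial>P\<bar> \<le> (\<integral>\<omega>. A * (1 + y \<omega> + 2 * L\<^sup>2 * (norm (g \<omega>))\<^sup>2) \<partial>P)"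
  proof (intro integral_abs_bound[THEN order_trans] integral_mono)
    fix \<omega>
    have "\<bar>Y \<omega> * (1 + y \<omega>)\<bar> \<le> A * \<bar>1 + y \<omega>\<bar>"
      by (simp add: abs_mult Y(2) mult_right_mono)
    also have "\<dots> \<le> A * (1 + y \<omega> + 2 * L\<^sup>2 * (norm (g \<omega>))\<^sup>2)"
      using abs_one_plus_le[of "y \<omega>"] y_sq[of \<omega>] A by (intro mult_left_mono) auto
    finally show "\<bar>Y \<omega> * (1 + y \<omega>)\<bar> \<le> A * (1 + y \<omega> + 2 * L\<^sup>2 * (norm (g \<omega>))\<^sup>2)" .
  qed (use int_y g(3) in auto)
  also have "\<dots> = A * (1 + (\<integral>\<omega>. y \<omega> \<partial>P) + 2 * L\<^sup>2 * (\<integral>\<omega>. (norm (g \<omega>))\<^sup>2 \<partial>P))"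
    using int_y g(3) by (simp add: prob_space)
  also have "\<dots> \<le> A * (1 + L * e + 2 * L\<^sup>2 * S)"
  proof -
    have "(\<integral>\<omega>. y \<omega> \<partial>P) \<le> norm \<beta> * e" using g(5) unfolding y_def by linarith
    also have "\<dots> \<le> L * e" using \<beta> e by (rule mult_right_mono)
    finally show ?thesis using g(4) A by (intro mult_left_mono add_mono) auto
  qed
  finally show ?thesis unfolding y_def .
qed

lemma expectation_plus_Lipschitz_term_bound:
  fixes g :: "'a \<Rightarrow> 'v::euclidean_space" and Y :: "'a \<Rightarrow> real" and \<phi> :: "'v \<Rightarrow> real"
  assumes "prob_space P"
    and g: "g \<in> borel_measurable P" "integrable P g"
      "integrable P (\<lambda>\<omega>. (norm (g \<omega>))\<^sup>2)" "(\<integral>\<omega>. (norm (g \<omega>))\<^sup>2 \<partial>P) \<le> S"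
      "\<And>\<beta>. \<bar>\<integral>\<omega>. \<beta> \<bullet> g \<omega> \<partial>P\<bar> \<le> norm \<beta> * e"
    and Y: "Y \<in> borel_measurable P" "\<And>\<omega>. \<bar>Y \<omega>\<bar> \<le> A"
    and \<phi>: "\<And>v. \<bar>\<phi> v - \<phi> 0\<bar> \<le> L * norm v" "0 \<le> L"
    and h: "0 < h"
  shows "\<bar>(\<integral>\<omega>. Y \<omega> \<partial>P) + \<phi> ((1 / h) *\<^sub>R (\<integral>\<omega>. Y \<omega> *\<^sub>R g \<omega> \<partial>P)) * h\<bar>
           \<le> A * (1 + L * e + 2 * L\<^sup>2 * S) + \<bar>\<phi> 0\<bar> * h"
proof -
  interpret prob_space P by fact
  have [measurable]: "g \<in> borel_measurable P" "Y \<in> borel_measurable P" using g Y by auto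
  have int: "integrable P Y" "integrable P (\<lambda>\<omega>. Y \<omega> *\<^sub>R g \<omega>)"
    using integrable_bounded_scaleR[OF _ Y, of "\<lambda>_. 1 :: real"] integrable_bounded_scaleR[OF g(2) Y] by auto
  define w where "w = (\<integral>\<omega>. Y \<omega> *\<^sub>R g \<omega> \<partial>P)"
  define D where "D = \<phi> ((1 / h) *\<^sub>R w) - \<phi> 0"
  have D: "\<bar>D\<bar> * h \<le> L * norm w"
    using \<phi>(1)[of "(1 / h) *\<^sub>R w"] h by (simp add: D_def field_simps)
  (* The increment hD is linear in w along a direction of length at most L, which turns
     E[Y] + hD into E[Y (1 + \<beta> \<bullet> g)]. *)
  define \<beta> where "\<beta> = (if w = 0 then 0 else (h * D / (norm w)\<^sup>2) *\<^sub>R w)"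
  have "\<beta> \<bullet> w = h * D"
    using h by (auto simp: \<beta>_def D_def power2_norm_eq_inner)
  also have "\<beta> \<bullet> w = (\<integral>\<omega>. Y \<omega> * (\<beta> \<bullet> g \<omega>) \<partial>P)"
    unfolding w_def using int(2) by (simp flip: integral_inner_right)
  finally have "(\<integral>\<omega>. Y \<omega> \<partial>P) + h * D = (\<integral>\<omega>. Y \<omega> * (1 + \<beta> \<bullet> g \<omega>) \<partial>P)"
    using int integrable_inner_right[OF int(2), of \<beta>] by (simp add: distrib_left)
  moreover have "norm \<beta> \<le> L"
    using D h \<phi>(2) by (auto simp: \<beta>_def power2_eq_square field_simps abs_mult)
  moreover have "0 \<le> e" using g(5)[of "SOME i. i \<in> Basis"] by (simp add: order_trans)
  ultimately have "\<bar>(\<integral>\<omega>. Y \<omega> \<partial>P) + h * D\<bar> \<le> A * (1 + L * e + 2 * L\<^sup>2 * S)"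
    using integral_bounded_mult_one_plus_inner_le[OF assms(1) g(1-5) Y] by simp
  moreover have "(\<integral>\<omega>. Y \<omega> \<partial>P) + \<phi> ((1 / h) *\<^sub>R w) * h = ((\<integral>\<omega>. Y \<omega> \<partial>P) + h * D) + \<phi> 0 * h"
    by (simp add: D_def algebra_simps)
  moreover have "\<bar>\<phi> 0 * h\<bar> = \<bar>\<phi> 0\<bar> * h" using h by (simp add: abs_mult)
  ultimately show ?thesis
    unfolding w_def[symmetric] using abs_triangle_ineq[of "(\<integral>\<omega>. Y \<omega> \<partial>P) + h * D" "\<phi> 0 * h"] by linarith
qed

lemma brownian_increment_moments:
  fixes B :: "real \<Rightarrow> 'a \<Rightarrow> real^'d"
  assumes bm: "brownian_motion P B" and s: "0 \<le> s" "s < t"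
  shows "integrable P (\<lambda>\<omega>. (B t \<omega> - B s \<omega>) $ j)"
    and "(\<integral>\<omega>. (B t \<omega> - B s \<omega>) $ j \<partial>P) = 0"
    and "integrable P (\<lambda>\<omega>. ((B t \<omega> - B s \<omega>) $ j)\<^sup>2)"
    and "(\<integral>\<omega>. ((B t \<omega> - B s \<omega>) $ j)\<^sup>2 \<partial>P) = t - s"
proof -
  interpret prob_space P using bm unfolding brownian_motion_def by blast
  define ts where "ts = (\<lambda>n::nat. if n = 0 then s else t)"
  have "distributed P lborel (\<lambda>\<omega>. (B (ts (Suc 0)) \<omega> - B (ts 0) \<omega>) $ j)
      (\<lambda>x. ennreal (normal_density 0 (sqrt (ts (Suc 0) - ts 0)) x))"
    using bm s unfolding brownian_motion_def by (elim conjE allE[of _ ts] allE[of _ 1]) (auto simp: ts_def)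
  then have D: "distributed P lborel (\<lambda>\<omega>. (B t \<omega> - B s \<omega>) $ j)
      (\<lambda>x. ennreal (normal_density 0 (sqrt (t - s)) x))"
    by (simp add: ts_def)
  have sd: "0 < sqrt (t - s)" using s by simp
  show "integrable P (\<lambda>\<omega>. (B t \<omega> - B s \<omega>) $ j)"
    using distributed_integrable[OF D, of "\<lambda>x. x"] integrable_normal_moment[OF sd, of 0 1] by simp
  show "(\<integral>\<omega>. (B t \<omega> - B s \<omega>) $ j \<partial>P) = 0"
    using normal_distributed_expectation[OF sd D] by simp
  show "integrable P (\<lambda>\<omega>. ((B t \<omega> - B s \<omega>) $ j)\<^sup>2)"
    using distributed_integrable[OF D, of "\<lambda>x. x\<^sup>2"] integrable_normal_moment[OF sd, of 0 2] by simp
  show "(\<integral>\<omega>. ((B t \<omega> - B s \<omega>) $ j)\<^sup>2 \<partial>P) = t - s"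
    using distributed_integral[OF D, of "\<lambda>x. x\<^sup>2"] integral_normal_moment_even[OF sd, of 0 1] s
    by simp
qed

lemma brownian_path_tendsto_at_left:
  assumes "brownian_motion P B" "\<omega> \<in> space P" "0 < t"
  shows "((\<lambda>s. B s \<omega>) \<longlongrightarrow> B t \<omega>) (at_left t)"
proof -
  have "continuous_on {0..} (\<lambda>s. B s \<omega>)" using assms unfolding brownian_motion_def by blast
  then have "((\<lambda>s. B s \<omega>) \<longlongrightarrow> B t \<omega>) (at t within {0..t})"
    using assms(3) by (auto simp: continuous_on_def intro: tendsto_within_subset[of _ _ _ "{0..}"])
  then show ?thesis using assms(3) by (simp add: at_within_Icc_at_left)
qed

lemma tgrid_nonneg: "0 < T / real N \<Longrightarrow> 0 \<le> tgrid T N k"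
  unfolding tgrid_def by (intro mult_nonneg_nonneg) auto

lemma tgrid_Suc: "tgrid T N (Suc k) = tgrid T N k + T / real N"
  unfolding tgrid_def by (simp add: distrib_right del: times_divide_eq_right)

lemma dB_moments:
  fixes B :: "real \<Rightarrow> 'a \<Rightarrow> real^'d"
  assumes bm: "brownian_motion P B" and h: "0 < T / real N"
  shows "dB B T N k \<in> borel_measurable P"
    and "integrable P (dB B T N k)"
    and "(\<integral>\<omega>. dB B T N k \<omega> \<partial>P) = 0"
    and "integrable P (\<lambda>\<omega>. (norm (dB B T N k \<omega>))\<^sup>2)"
    and "(\<integral>\<omega>. (norm (dB B T N k \<omega>))\<^sup>2 \<partial>P) = real CARD('d) * (T / real N)"
proof -
  interpret prob_space P using bm unfolding brownian_motion_def by blast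
  have grid: "0 \<le> tgrid T N k" "tgrid T N k < tgrid T N (Suc k)"
    using h by (simp_all add: tgrid_nonneg tgrid_Suc)
  note moments = brownian_increment_moments[OF bm grid, folded dB_def]
  have [measurable]: "B t \<in> borel_measurable P" if "0 \<le> t" for t
    using bm that unfolding brownian_motion_def by blast
  show meas[measurable]: "dB B T N k \<in> borel_measurable P"
    using grid(1) tgrid_nonneg[OF h, of "Suc k"] unfolding dB_def[abs_def] by measurable
  have norm_sq: "(norm (dB B T N k \<omega>))\<^sup>2 = (\<Sum>j\<in>UNIV. (dB B T N k \<omega> $ j)\<^sup>2)" for \<omega>
    by (simp add: power2_norm_eq_inner inner_vec_def flip: power2_eq_square)
  show sq: "integrable P (\<lambda>\<omega>. (norm (dB B T N k \<omega>))\<^sup>2)"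
    unfolding norm_sq using moments(3) by (intro Bochner_Integration.integrable_sum) auto
  show "(\<integral>\<omega>. (norm (dB B T N k \<omega>))\<^sup>2 \<partial>P) = real CARD('d) * (T / real N)"
    unfolding norm_sq using moments(3,4) grid by (subst Bochner_Integration.integral_sum) (auto simp: tgrid_Suc)
  show int: "integrable P (dB B T N k)"
    using square_integrable_imp_integrable[of "\<lambda>\<omega>. norm (dB B T N k \<omega>)"] sq
    by (simp add: integrable_norm_iff[OF meas, symmetric])
  show "(\<integral>\<omega>. dB B T N k \<omega> \<partial>P) = 0"
  proof (rule vec_eq_iff[THEN iffD2, rule_format])
    fix j :: 'd
    have "(\<integral>\<omega>. dB B T N k \<omega> \<partial>P) $ j = (\<integral>\<omega>. dB B T N k \<omega> $ j \<partial>P)"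
      using int by (simp add: cart_eq_inner_axis)
    then show "(\<integral>\<omega>. dB B T N k \<omega> \<partial>P) $ j = 0 $ j" using moments(2) by simp
  qed
qed

(* No measurability of F is needed since Pi_i takes only countably many values; F will be the
   numerical solution, an arbitrary function. *)
lemma measurable_comp_Pi_i:
  fixes F :: "real^'d \<Rightarrow> 'b::topological_space" and \<xi> :: "'a \<Rightarrow> real^'d"
  assumes \<xi>[measurable]: "\<xi> \<in> borel_measurable M"
  shows "(\<lambda>\<omega>. F (Pi_i \<delta> R \<rho> k (\<xi> \<omega>))) \<in> borel_measurable M"
proof -
  define round :: "real^'d \<Rightarrow> 'd \<Rightarrow> int" where "round x j = \<lfloor>x $ j / \<delta> + 1/2\<rfloor>" for x j
  have Pi_i_round: "Pi_i \<delta> R \<rho> k x = clampQ \<delta> (radius R \<rho> k) (\<chi> j. \<delta> * of_int (round x j))" for x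
    by (simp add: Pi_i_def Pi_inf_def round_def)
  have "(\<lambda>\<omega>. round (\<xi> \<omega>)) \<in> measurable M (count_space UNIV)"
    unfolding measurable_count_space_eq2_countable
  proof safe
    fix n :: "'d \<Rightarrow> int"
    have [measurable]: "(\<lambda>\<omega>. \<xi> \<omega> $ j) \<in> borel_measurable M" for j
      using measurable_compose[OF \<xi> borel_measurable_nth] by simp
    have "Measurable.pred M (\<lambda>\<omega>. \<forall>j. \<lfloor>\<xi> \<omega> $ j / \<delta> + 1/2\<rfloor> = n j)" by measurable
    moreover have "(\<lambda>\<omega>. round (\<xi> \<omega>)) -` {n} \<inter> space M = {\<omega>\<in>space M. \<forall>j. \<lfloor>\<xi> \<omega> $ j / \<delta> + 1/2\<rfloor> = n j}"
      by (auto simp: round_def fun_eq_iff)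
    ultimately show "(\<lambda>\<omega>. round (\<xi> \<omega>)) -` {n} \<inter> space M \<in> sets M" by (simp add: pred_def)
  qed auto
  then show ?thesis
    unfolding Pi_i_round by (rule measurable_compose_countable[rotated]) simp
qed

lemma round_to_grid_dist_le:
  fixes \<delta> y :: real
  assumes "0 < \<delta>"
  shows "\<bar>\<delta> * of_int \<lfloor>y / \<delta> + 1/2\<rfloor> - y\<bar> \<le> \<delta> / 2"
proof -
  define n where "n = \<lfloor>y / \<delta> + 1/2\<rfloor>"
  have "of_int n \<le> y / \<delta> + 1/2" "y / \<delta> + 1/2 < of_int n + 1"
    unfolding n_def by (rule of_int_floor_le, rule real_of_int_floor_add_one_gt)
  then have "\<delta> * of_int n \<le> y + \<delta> / 2" "y + \<delta> / 2 < \<delta> * of_int n + \<delta>"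
    using assms by (simp_all add: field_simps)
  then show ?thesis unfolding n_def[symmetric] abs_le_iff by linarith
qed

lemma clamp_dist_le:
  fixes \<delta> M y p :: real
  assumes "- M - \<delta> / 2 \<le> y" "y < M + \<delta> / 2" "\<bar>p - y\<bar> \<le> \<delta> / 2"
  shows "\<bar>min (max p (- M)) M - y\<bar> \<le> \<delta>"
  using assms unfolding min_def max_def abs_le_iff by auto

lemma Pi_i_dist_le:
  fixes Y :: "real^'d" and \<delta> :: real
  assumes "0 < \<delta>" and "Y \<in> Delta_i \<delta> R \<rho> k"
  shows "norm (Pi_i \<delta> R \<rho> k Y - Y) \<le> CARD('d) * \<delta>"
proof -
  have "\<bar>(Pi_i \<delta> R \<rho> k Y - Y) $ j\<bar> \<le> \<delta>" for j
    using assms(2) unfolding Pi_i_def clampQ_def Pi_inf_def Delta_i_def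
    by (auto intro!: clamp_dist_le round_to_grid_dist_le[OF assms(1)])
  then have "(\<Sum>j\<in>UNIV. \<bar>(Pi_i \<delta> R \<rho> k Y - Y) $ j\<bar>) \<le> CARD('d) * \<delta>"
    using sum_mono[of "UNIV :: 'd set" _ "\<lambda>_. \<delta>"] by simp
  then show ?thesis using norm_le_l1_cart order_trans by blast
qed

lemma assumption_A_f_Lipschitz:
  assumes "assumption_A L Lam lam K \<alpha> b f \<sigma> H DH"
  shows "\<bar>f x y z - f x y z'\<bar> \<le> \<bar>L\<bar> * norm (z - z')"
proof -
  have "\<bar>f x y z - f x y z'\<bar> \<le> L * (norm (x - x) + \<bar>y - y\<bar> + norm (z - z'))"
    using assms[unfolded assumption_A_def, THEN conjunct1, rule_format, of x y z x y z'] by (rule conjunct2)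
  also have "\<dots> \<le> \<bar>L\<bar> * norm (z - z')" by (simp add: mult_right_mono)
  finally show ?thesis .
qed

lemma assumption_A_growth:
  assumes "assumption_A L Lam lam K \<alpha> b f \<sigma> H DH"
  shows "\<bar>f x y 0\<bar> \<le> \<bar>Lam\<bar> * (1 + \<bar>y\<bar>)" and "norm (\<sigma> x y) \<le> \<bar>Lam\<bar> * (1 + \<bar>y\<bar>)"
proof -
  have "norm (b x y 0) + \<bar>f x y 0\<bar> + norm (\<sigma> x y) \<le> Lam * (1 + \<bar>y\<bar>)"
    using assms[unfolded assumption_A_def, THEN conjunct2, THEN conjunct2, THEN conjunct2, THEN conjunct1,
        rule_format, of x y 0]
    by simp
  moreover have "Lam * (1 + \<bar>y\<bar>) \<le> \<bar>Lam\<bar> * (1 + \<bar>y\<bar>)" by (simp add: mult_right_mono)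
  ultimately show "\<bar>f x y 0\<bar> \<le> \<bar>Lam\<bar> * (1 + \<bar>y\<bar>)" "norm (\<sigma> x y) \<le> \<bar>Lam\<bar> * (1 + \<bar>y\<bar>)"
    using norm_ge_zero[of "b x y 0"] norm_ge_zero[of "\<sigma> x y"] abs_ge_zero[of "f x y 0"] by linarith+
qed

lemma assumption_A_terminal_bounded:
  assumes "assumption_A L Lam lam K \<alpha> b f \<sigma> H DH"
  shows "\<bar>H x\<bar> \<le> \<bar>K\<bar>"
proof -
  have "\<bar>H x\<bar> \<le> K" using assms unfolding assumption_A_def by blast
  then show ?thesis by simp
qed

definition u_bound :: "real \<Rightarrow> real \<Rightarrow> real \<Rightarrow> real \<Rightarrow> real \<Rightarrow> real \<Rightarrow> real \<Rightarrow> real" where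
  "u_bound d L Lam K c1 c2 T = (\<bar>K\<bar> + 1) * exp ((\<bar>L\<bar> * \<bar>c1\<bar> + 2 * L\<^sup>2 * (2 * d + 2 * c2\<^sup>2) + \<bar>Lam\<bar>) * T)"

definition jump_const :: "real \<Rightarrow> real \<Rightarrow> real \<Rightarrow> real \<Rightarrow> real \<Rightarrow> real \<Rightarrow> real \<Rightarrow> real" where
  "jump_const d L Lam K c1 c2 T =
     2 * d\<^sup>2 * T + 2 * (\<bar>Lam\<bar> * (1 + u_bound d L Lam K c1 c2 T))\<^sup>2 * c2\<^sup>2 * T + 1"

lemma jump_const_pos: "0 < T \<Longrightarrow> 0 < jump_const d L Lam K c1 c2 T"
  unfolding jump_const_def by (intro add_nonneg_pos add_nonneg_nonneg mult_nonneg_nonneg) auto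

lemma rescaled_error_le:
  fixes D c \<delta> m h :: real
  assumes h: "0 < h" and "0 \<le> D" "0 \<le> c"
  shows "real N * (D * \<delta>\<^sup>2 + c * h * m\<^sup>2)
           \<le> (D * (real N * h) + c * (real N * h) + 1) * h * ((\<delta> / h)\<^sup>2 + (h powr (- 1 / 2) * m)\<^sup>2)"
proof -
  define C where "C = D * (real N * h) + c * (real N * h) + 1"
  have "(h powr (- 1 / 2))\<^sup>2 = h powr (- 1)"
    using h by (simp add: power2_eq_square flip: powr_add)
  then have rescale: "h * ((\<delta> / h)\<^sup>2 + (h powr (- 1 / 2) * m)\<^sup>2) = \<delta>\<^sup>2 / h + m\<^sup>2"
    using h by (simp add: powr_minus_divide power2_eq_square field_simps)
  have "real N * (D * \<delta>\<^sup>2 + c * h * m\<^sup>2) = (D * (real N * h)) * (\<delta>\<^sup>2 / h) + (c * (real N * h)) * m\<^sup>2"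
    using h by (simp add: field_simps power2_eq_square)
  also have "\<dots> \<le> C * (\<delta>\<^sup>2 / h) + C * m\<^sup>2"
    by (intro add_mono mult_right_mono) (use assms in \<open>simp_all add: C_def\<close>)
  also have "\<dots> = C * (\<delta>\<^sup>2 / h + m\<^sup>2)"
    by (simp only: distrib_left)
  also have "\<dots> = C * h * ((\<delta> / h)\<^sup>2 + (h powr (- 1 / 2) * m)\<^sup>2)"
    by (simp only: mult.assoc rescale)
  finally show ?thesis unfolding C_def .
qed

locale quantized_scheme =
  fixes L Lam lam K \<alpha> :: real and Cq :: "real \<Rightarrow> real"
    and b :: "real^'d \<Rightarrow> real \<Rightarrow> real^'d \<Rightarrow> real^'d" and f :: "real^'d \<Rightarrow> real \<Rightarrow> real^'d \<Rightarrow> real"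
    and \<sigma> :: "real^'d \<Rightarrow> real \<Rightarrow> real^'d^'d" and H :: "real^'d \<Rightarrow> real" and DH :: "real^'d \<Rightarrow> real^'d"
    and P :: "'a measure" and B :: "real \<Rightarrow> 'a \<Rightarrow> real^'d" and G :: "real^'d \<Rightarrow> real^'d"
    and T :: real and N Mq :: nat and \<delta> R \<rho> :: real
  assumes A: "assumption_A L Lam lam K \<alpha> b f \<sigma> H DH"
    and brownian: "brownian_motion P B"
    and T_pos: "0 < T" and N_pos: "1 \<le> N"
    and G_measurable: "G \<in> borel_measurable borel"
    and quantization_error: "\<forall>q\<ge>1. \<forall>k<N.
          integrable P (\<lambda>\<omega>. norm (gB G B T N k \<omega> - dB B T N k \<omega>) powr q) \<and>
          (\<integral>\<omega>. norm (gB G B T N k \<omega> - dB B T N k \<omega>) powr q \<partial>P) powr (1 / q)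
            \<le> Cq q * sqrt (T / real N) * real Mq powr (- 1 / real CARD('d))"
    and Mq_pos: "1 \<le> Mq" and Mq_large: "real Mq powr (- 2 / real CARD('d)) < T / real N"
    and \<delta>_pos: "0 < \<delta>"
begin

abbreviation "h \<equiv> T / real N"

abbreviation "uv \<equiv> uvj b f \<sigma> H DH P B G T N \<delta> R \<rho>"
abbreviation "X \<equiv> Xd b f \<sigma> H DH P B G T N \<delta> R \<rho>"
abbreviation "X_step \<equiv> Xstep b f \<sigma> H DH P B G T N \<delta> R \<rho>"
abbreviation "X_left \<equiv> Xleft b f \<sigma> H DH P B G T N \<delta> R \<rho>"
abbreviation "u_bar \<equiv> ubar b f \<sigma> H DH P B G T N \<delta> R \<rho>"
abbreviation "v_hat \<equiv> vhat b f \<sigma> H DH P B G T N \<delta> R \<rho>"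
abbreviation "tau \<equiv> tau_inf b f \<sigma> H DH P B G T N \<delta> R \<rho>"

sublocale prob_space P
  using brownian unfolding brownian_motion_def by blast

lemma h_pos: "0 < h"
  using T_pos N_pos by simp

lemma quantization_scale:
  defines "m \<equiv> real Mq powr (- 1 / real CARD('d))"
  shows "0 \<le> m" and "m \<le> 1" and "m\<^sup>2 < h"
proof -
  show "0 \<le> m" unfolding m_def by simp
  show "m \<le> 1" unfolding m_def using powr_mono2'[of "- 1 / real CARD('d)" 1 "real Mq"] Mq_pos by simp
  have "m\<^sup>2 = real Mq powr (- 2 / real CARD('d))"
    unfolding m_def using Mq_pos by (simp add: power2_eq_square flip: powr_add)
  then show "m\<^sup>2 < h" using Mq_large by simp
qed

lemma quantization_error_L1:
  assumes "k < N"
  shows "integrable P (\<lambda>\<omega>. norm (gB G B T N k \<omega> - dB B T N k \<omega>))"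
    and "(\<integral>\<omega>. norm (gB G B T N k \<omega> - dB B T N k \<omega>) \<partial>P) \<le> \<bar>Cq 1\<bar> * h"
proof -
  define m where "m = real Mq powr (- 1 / real CARD('d))"
  note scale = quantization_scale[folded m_def]
  have q1: "integrable P (\<lambda>\<omega>. norm (gB G B T N k \<omega> - dB B T N k \<omega>)) \<and>
      (\<integral>\<omega>. norm (gB G B T N k \<omega> - dB B T N k \<omega>) \<partial>P) \<le> Cq 1 * sqrt h * m"
    using quantization_error[rule_format, of 1 k] assms unfolding m_def by simp
  then show "integrable P (\<lambda>\<omega>. norm (gB G B T N k \<omega> - dB B T N k \<omega>))" by blast
  have "m \<le> sqrt h" using scale(3) by (simp add: real_le_rsqrt)
  then have "sqrt h * m \<le> h" using h_pos mult_left_mono[of m "sqrt h" "sqrt h"] by simp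
  moreover have "0 \<le> sqrt h * m" using scale(1) h_pos by (intro mult_nonneg_nonneg real_sqrt_ge_zero) auto
  ultimately have "Cq 1 * (sqrt h * m) \<le> \<bar>Cq 1\<bar> * h"
    by (intro mult_mono) auto
  then show "(\<integral>\<omega>. norm (gB G B T N k \<omega> - dB B T N k \<omega>) \<partial>P) \<le> \<bar>Cq 1\<bar> * h"
    using q1 by (simp add: mult.assoc)
qed

lemma quantization_error_L2:
  assumes "k < N"
  shows "integrable P (\<lambda>\<omega>. (norm (gB G B T N k \<omega> - dB B T N k \<omega>))\<^sup>2)"
    and "(\<integral>\<omega>. (norm (gB G B T N k \<omega> - dB B T N k \<omega>))\<^sup>2 \<partial>P)
           \<le> (Cq 2)\<^sup>2 * h * (real Mq powr (- 1 / real CARD('d)))\<^sup>2"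
proof -
  define I where "I = (\<integral>\<omega>. (norm (gB G B T N k \<omega> - dB B T N k \<omega>))\<^sup>2 \<partial>P)"
  define m where "m = real Mq powr (- 1 / real CARD('d))"
  have q2: "integrable P (\<lambda>\<omega>. (norm (gB G B T N k \<omega> - dB B T N k \<omega>))\<^sup>2) \<and> sqrt I \<le> Cq 2 * sqrt h * m"
    using quantization_error[rule_format, of 2 k] assms unfolding I_def m_def by (simp add: powr_half_sqrt)
  then show "integrable P (\<lambda>\<omega>. (norm (gB G B T N k \<omega> - dB B T N k \<omega>))\<^sup>2)" by blast
  have "0 \<le> I" unfolding I_def by (intro integral_nonneg_AE) auto
  then have "I = (sqrt I)\<^sup>2" by simp
  also have "\<dots> \<le> (Cq 2 * sqrt h * m)\<^sup>2" using q2 \<open>0 \<le> I\<close> by (intro power_mono) auto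
  also have "\<dots> = (Cq 2)\<^sup>2 * h * m\<^sup>2" using h_pos by (simp add: power_mult_distrib)
  finally show "I \<le> (Cq 2)\<^sup>2 * h * (real Mq powr (- 1 / real CARD('d)))\<^sup>2" unfolding m_def .
qed

lemma quantized_increment_moments:
  assumes "k < N"
  shows "gB G B T N k \<in> borel_measurable P"
    and "integrable P (gB G B T N k)"
    and "\<bar>\<integral>\<omega>. \<beta> \<bullet> gB G B T N k \<omega> \<partial>P\<bar> \<le> norm \<beta> * (\<bar>Cq 1\<bar> * h)"
    and "integrable P (\<lambda>\<omega>. (norm (gB G B T N k \<omega>))\<^sup>2)"
    and "(\<integral>\<omega>. (norm (gB G B T N k \<omega>))\<^sup>2 \<partial>P) \<le> (2 * real CARD('d) + 2 * (Cq 2)\<^sup>2) * h"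
proof -
  note dB = dB_moments[OF brownian h_pos, of k]
  note L1 = quantization_error_L1[OF assms] and L2 = quantization_error_L2[OF assms]
  note G_measurable[measurable] dB(1)[measurable]
  show g_meas: "gB G B T N k \<in> borel_measurable P"
    unfolding gB_def[abs_def] gq_def by measurable
  note perturbation = integral_inner_perturbation_le[OF dB(2,3) g_meas L1(1)]
  show "integrable P (gB G B T N k)" by (rule perturbation(1))
  show "\<bar>\<integral>\<omega>. \<beta> \<bullet> gB G B T N k \<omega> \<partial>P\<bar> \<le> norm \<beta> * (\<bar>Cq 1\<bar> * h)"
    using perturbation(2)[of \<beta>] mult_left_mono[OF L1(2) norm_ge_zero[of \<beta>]] by linarith
  note sum = integral_norm_power2_le_sum[OF prob_space_axioms g_meas dB(1,4) L2(1)]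
  show "integrable P (\<lambda>\<omega>. (norm (gB G B T N k \<omega>))\<^sup>2)" by (rule sum(1))
  have "(real Mq powr (- 1 / real CARD('d)))\<^sup>2 \<le> 1"
    using quantization_scale(1,2) by (simp add: power_le_one)
  then have "(Cq 2)\<^sup>2 * h * (real Mq powr (- 1 / real CARD('d)))\<^sup>2 \<le> (Cq 2)\<^sup>2 * h * 1"
    by (intro mult_left_mono mult_nonneg_nonneg) (use h_pos in auto)
  moreover have "(2 * real CARD('d) + 2 * (Cq 2)\<^sup>2) * h = 2 * (real CARD('d) * h) + 2 * ((Cq 2)\<^sup>2 * h * 1)"
    by (simp add: algebra_simps)
  ultimately show "(\<integral>\<omega>. (norm (gB G B T N k \<omega>))\<^sup>2 \<partial>P) \<le> (2 * real CARD('d) + 2 * (Cq 2)\<^sup>2) * h"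
    using sum(2) dB(5) L2(2) by linarith
qed

lemma uv_step_fst_bound:
  assumes k: "k < N" and bounded: "\<And>y. \<bar>fst (w y)\<bar> \<le> A"
  shows "\<bar>fst (uv_step b f \<sigma> P B G T N \<delta> R \<rho> k w x)\<bar>
           \<le> A * (1 + (\<bar>L\<bar> * \<bar>Cq 1\<bar> + 2 * L\<^sup>2 * (2 * real CARD('d) + 2 * (Cq 2)\<^sup>2)) * h) + \<bar>Lam\<bar> * (1 + A) * h"
proof -
  note g = quantized_increment_moments[OF k]
  define u where "u = fst (w x)"
  define vh where "vh = vhat_step \<sigma> P B G T N \<delta> R \<rho> k w x"
  define Y where "Y = (\<lambda>\<omega>. fst (w (Pi_i \<delta> R \<rho> (Suc k) (x + trans b \<sigma> B G T N k u vh x \<omega>))))"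
  have [measurable]: "gB G B T N k \<in> borel_measurable P" "(*v) (\<sigma> x u) \<in> borel_measurable borel"
    using g(1) by (auto intro: borel_measurable_continuous_onI matrix_vector_mult_linear_continuous_on)
  have "(\<lambda>\<omega>. x + trans b \<sigma> B G T N k u vh x \<omega>) \<in> borel_measurable P"
    unfolding trans_def by measurable
  then have Y_meas: "Y \<in> borel_measurable P"
    unfolding Y_def by (rule measurable_comp_Pi_i)
  have "fst (uv_step b f \<sigma> P B G T N \<delta> R \<rho> k w x)
      = (\<integral>\<omega>. Y \<omega> \<partial>P) + f x u ((1 / h) *\<^sub>R (\<integral>\<omega>. Y \<omega> *\<^sub>R gB G B T N k \<omega> \<partial>P)) * h"
    unfolding uv_step_def Let_def Y_def u_def vh_def by simp
  also have "\<bar>\<dots>\<bar> \<le> A * (1 + \<bar>L\<bar> * (\<bar>Cq 1\<bar> * h) + 2 * \<bar>L\<bar>\<^sup>2 * ((2 * real CARD('d) + 2 * (Cq 2)\<^sup>2) * h))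
                      + \<bar>f x u 0\<bar> * h"
    by (rule expectation_plus_Lipschitz_term_bound[OF prob_space_axioms g(1,2,4,5,3) Y_meas])
      (use bounded assumption_A_f_Lipschitz[OF A, of x u _ 0] h_pos in \<open>auto simp: Y_def\<close>)
  also have "\<dots> \<le> A * (1 + (\<bar>L\<bar> * \<bar>Cq 1\<bar> + 2 * L\<^sup>2 * (2 * real CARD('d) + 2 * (Cq 2)\<^sup>2)) * h) + \<bar>Lam\<bar> * (1 + A) * h"
  proof -
    have "\<bar>f x u 0\<bar> \<le> \<bar>Lam\<bar> * (1 + A)"
      using assumption_A_growth(1)[OF A, of x u] bounded[of x] unfolding u_def
      by (meson abs_ge_zero add_left_mono mult_left_mono order_trans)
    then have "\<bar>f x u 0\<bar> * h \<le> \<bar>Lam\<bar> * (1 + A) * h"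
      using h_pos by (intro mult_right_mono) auto
    then show ?thesis by (simp add: algebra_simps)
  qed
  finally show ?thesis .
qed

lemma uvj_fst_bound:
  assumes "j \<le> N"
  shows "\<bar>fst (uv j x)\<bar> \<le> u_bound (real CARD('d)) L Lam K (Cq 1) (Cq 2) T"
proof -
  define C0 where "C0 = \<bar>L\<bar> * \<bar>Cq 1\<bar> + 2 * L\<^sup>2 * (2 * real CARD('d) + 2 * (Cq 2)\<^sup>2)"
  define C where "C = C0 + \<bar>Lam\<bar>"
  have C0: "0 \<le> C0" unfolding C0_def by simp
  have growth: "\<bar>fst (uv j x)\<bar> + 1 \<le> (\<bar>K\<bar> + 1) * (1 + C * h) ^ j" for x
    using assms
  proof (induction j arbitrary: x)
    case 0
    then show ?case using assumption_A_terminal_bounded[OF A] by simp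
  next
    case (Suc j)
    define A where "A = (\<bar>K\<bar> + 1) * (1 + C * h) ^ j - 1"
    have "\<bar>fst (uv j y)\<bar> \<le> A" for y
      using Suc.IH[of y] Suc.prems unfolding A_def by fastforce
    then have "\<bar>fst (uv (Suc j) x)\<bar> \<le> A * (1 + C0 * h) + \<bar>Lam\<bar> * (1 + A) * h"
      unfolding uvj.simps C0_def using Suc.prems by (intro uv_step_fst_bound) auto
    also have "\<dots> + 1 \<le> (A + 1) * (1 + C * h)"
      using mult_nonneg_nonneg[OF C0 less_imp_le[OF h_pos]] by (simp add: C_def algebra_simps add_divide_distrib)
    finally show ?case by (simp add: A_def mult_ac)
  qed
  have "0 \<le> C" using C0 by (simp add: C_def)
  then have "(1 + C * h) ^ j \<le> exp (real j * (C * h))"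
    using h_pos by (intro one_plus_power_le_exp mult_nonneg_nonneg) auto
  also have "\<dots> \<le> exp (C * T)"
  proof -
    have "real j * h \<le> T" using assms T_pos N_pos by (simp add: field_simps)
    then have "C * (real j * h) \<le> C * T" using \<open>0 \<le> C\<close> by (rule mult_left_mono)
    then show ?thesis by (simp add: mult_ac)
  qed
  finally have "(\<bar>K\<bar> + 1) * (1 + C * h) ^ j \<le> (\<bar>K\<bar> + 1) * exp (C * T)"
    by (intro mult_left_mono) auto
  then have "\<bar>fst (uv j x)\<bar> + 1 \<le> (\<bar>K\<bar> + 1) * exp (C * T)"
    using growth[of x] by linarith
  then show ?thesis by (simp add: u_bound_def C_def C0_def)
qed

lemma X_left_tgrid_Suc:
  assumes \<omega>: "\<omega> \<in> space P" and x: "X x0 i \<omega> = x" and u: "u_bar (Suc i) x = u"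
  shows "X_left x0 (tgrid T N (Suc i)) \<omega> = x + h *\<^sub>R b x u (v_hat i x) + \<sigma> x u *v dB B T N i \<omega>"
proof -
  define t0 t where "t0 = tgrid T N i" and "t = tgrid T N (Suc i)"
  have t0: "0 \<le> t0" "t0 < t" and t: "t = t0 + h"
    using h_pos by (simp_all add: t0_def t_def tgrid_nonneg tgrid_Suc)
  define X' where "X' = (\<lambda>s. x + (s - t0) *\<^sub>R b x u (v_hat i x) + \<sigma> x u *v (B s \<omega> - B t0 \<omega>))"
  have ev: "\<forall>\<^sub>F s in at_left t. Xc b f \<sigma> H DH P B G T N \<delta> R \<rho> x0 s \<omega> = X' s"
    using eventually_at_left_real[OF t0(2)]
  proof (rule eventually_mono)
    fix s assume "s \<in> {t0<..<t}"
    moreover have "t0 = real i * h" "(real i + 1) * h = real i * h + h"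
      by (simp_all only: t0_def tgrid_def distrib_right mult_1)
    ultimately have "real i * h < s" "s < (real i + 1) * h"
      using t by auto
    then have "real i \<le> s / h" "s / h < real i + 1"
      by (simp_all only: pos_le_divide_eq[OF h_pos] pos_divide_less_eq[OF h_pos] less_imp_le)
    then have "nat \<lfloor>s / h\<rfloor> = i" by linarith
    then show "Xc b f \<sigma> H DH P B G T N \<delta> R \<rho> x0 s \<omega> = X' s"
      by (simp add: Xc_def X'_def t0_def x u)
  qed
  have lim: "(X' \<longlongrightarrow> X' t) (at_left t)"
    using brownian_path_tendsto_at_left[OF brownian \<omega>, of t] t0 unfolding X'_def
    by (intro tendsto_intros bounded_linear.tendsto[OF matrix_vector_mul_bounded_linear]) auto
  have "X_left x0 t \<omega> = X' t"
    unfolding Xleft_def using tendsto_cong[OF ev, THEN iffD2, OF lim]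
    by (intro tendsto_Lim trivial_limit_at_left_real)
  moreover have "t - t0 = h" using t by simp
  ultimately show ?thesis unfolding X'_def dB_def t_def[symmetric] t0_def[symmetric] by simp
qed

lemma jump_eq:
  assumes "X x0 i \<omega> = x" and "u_bar (Suc i) x = u" and "\<omega> \<in> space P"
  shows "X x0 (Suc i) \<omega> - X_left x0 (tgrid T N (Suc i)) \<omega>
           = (Pi_i \<delta> R \<rho> (Suc i) (X_step i x \<omega>) - X_step i x \<omega>)
             + \<sigma> x u *v (gB G B T N i \<omega> - dB B T N i \<omega>)"
proof -
  have "X_step i x \<omega> = x + h *\<^sub>R b x u (v_hat i x) + \<sigma> x u *v gB G B T N i \<omega>"
    using assms(2) by (simp add: Xstep_def trans_def add.assoc)
  then show ?thesis
    using X_left_tgrid_Suc[OF assms(3,1,2)] assms(1)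
    by (simp add: algebra_simps)
qed

lemma X_step_in_Delta_before_tau:
  assumes "i < N" and "ereal (tgrid T N (Suc i)) < tau x0 \<omega>"
  shows "X_step i (X x0 i \<omega>) \<omega> \<in> Delta_i \<delta> R \<rho> (Suc i)"
proof (rule ccontr)
  assume "X_step i (X x0 i \<omega>) \<omega> \<notin> Delta_i \<delta> R \<rho> (Suc i)"
  then have "tau x0 \<omega> \<le> ereal (tgrid T N (Suc i))"
    unfolding tau_inf_def using assms(1) by (intro Inf_lower) (auto intro!: exI[of _ "Suc i"])
  then show False using assms(2) by simp
qed

lemma jump_sq_le:
  assumes "i < N" and "\<omega> \<in> space P"
  shows "indicator {\<omega>. ereal (tgrid T N (Suc i)) < tau x0 \<omega>} \<omega>
           * (norm (X x0 (Suc i) \<omega> - X_left x0 (tgrid T N (Suc i)) \<omega>))\<^sup>2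
         \<le> 2 * (real CARD('d) * \<delta>)\<^sup>2
           + 2 * (\<bar>Lam\<bar> * (1 + u_bound (real CARD('d)) L Lam K (Cq 1) (Cq 2) T))\<^sup>2
               * (norm (gB G B T N i \<omega> - dB B T N i \<omega>))\<^sup>2"
    (is "_ \<le> 2 * ?a\<^sup>2 + 2 * ?S\<^sup>2 * ?e\<^sup>2")
proof (cases "ereal (tgrid T N (Suc i)) < tau x0 \<omega>")
  case True
  define x u where "x = X x0 i \<omega>" and "u = u_bar (Suc i) x"
  have "\<bar>u\<bar> \<le> u_bound (real CARD('d)) L Lam K (Cq 1) (Cq 2) T"
    unfolding u_def ubar_def by (rule uvj_fst_bound) simp
  then have \<sigma>: "norm (\<sigma> x u) \<le> ?S"
    using assumption_A_growth(2)[OF A, of x u] by (meson abs_ge_zero add_left_mono mult_left_mono order_trans)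
  have "norm (X x0 (Suc i) \<omega> - X_left x0 (tgrid T N (Suc i)) \<omega>)
      \<le> norm (Pi_i \<delta> R \<rho> (Suc i) (X_step i x \<omega>) - X_step i x \<omega>) + norm (\<sigma> x u) * ?e"
    unfolding jump_eq[OF x_def[symmetric] u_def[symmetric] assms(2)]
    using norm_triangle_ineq norm_matrix_vector_mult_le add_left_mono order_trans by blast
  also have "\<dots> \<le> ?a + ?S * ?e"
    using Pi_i_dist_le[OF \<delta>_pos X_step_in_Delta_before_tau[OF assms(1) True]] \<sigma>
    unfolding x_def by (intro add_mono mult_right_mono) auto
  finally have "(norm (X x0 (Suc i) \<omega> - X_left x0 (tgrid T N (Suc i)) \<omega>))\<^sup>2 \<le> (?a + ?S * ?e)\<^sup>2"
    by (intro power_mono) auto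
  also have "\<dots> \<le> 2 * ?a\<^sup>2 + 2 * ?S\<^sup>2 * ?e\<^sup>2"
    using power2_add_le[of ?a "?S * ?e"] by (simp add: power_mult_distrib mult.assoc)
  finally show ?thesis using True by simp
qed simp

lemma jump_expectation_le:
  assumes "i < N"
  shows "(\<integral>\<^sup>+\<omega>. ennreal (indicator {\<omega>. ereal (tgrid T N (Suc i)) < tau x0 \<omega>} \<omega>
             * (norm (X x0 (Suc i) \<omega> - X_left x0 (tgrid T N (Suc i)) \<omega>))\<^sup>2) \<partial>P)
         \<le> ennreal (2 * (real CARD('d) * \<delta>)\<^sup>2
             + 2 * (\<bar>Lam\<bar> * (1 + u_bound (real CARD('d)) L Lam K (Cq 1) (Cq 2) T))\<^sup>2
               * ((Cq 2)\<^sup>2 * h * (real Mq powr (- 1 / real CARD('d)))\<^sup>2))"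
proof -
  define a c where "a = 2 * (real CARD('d) * \<delta>)\<^sup>2"
    and "c = 2 * (\<bar>Lam\<bar> * (1 + u_bound (real CARD('d)) L Lam K (Cq 1) (Cq 2) T))\<^sup>2"
  define e where "e = (\<lambda>\<omega>. (norm (gB G B T N i \<omega> - dB B T N i \<omega>))\<^sup>2)"
  note L2 = quantization_error_L2[OF assms, folded e_def]
  have "(\<integral>\<^sup>+\<omega>. ennreal (indicator {\<omega>. ereal (tgrid T N (Suc i)) < tau x0 \<omega>} \<omega>
             * (norm (X x0 (Suc i) \<omega> - X_left x0 (tgrid T N (Suc i)) \<omega>))\<^sup>2) \<partial>P)
      \<le> (\<integral>\<^sup>+\<omega>. ennreal (a + c * e \<omega>) \<partial>P)"
    unfolding a_def c_def e_def by (intro nn_integral_mono ennreal_leI jump_sq_le assms)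
  also have "\<dots> = ennreal (\<integral>\<omega>. a + c * e \<omega> \<partial>P)"
    using L2(1) by (intro nn_integral_eq_integral) (auto simp: a_def c_def e_def)
  also have "\<dots> = ennreal (a + c * (\<integral>\<omega>. e \<omega> \<partial>P))"
    using L2(1) by (simp add: prob_space)
  also have "\<dots> \<le> ennreal (a + c * ((Cq 2)\<^sup>2 * h * (real Mq powr (- 1 / real CARD('d)))\<^sup>2))"
    using L2(2) by (intro ennreal_leI add_left_mono mult_left_mono) (auto simp: c_def)
  finally show ?thesis unfolding a_def c_def .
qed

lemma jump_sum_bound:
  "jump_sum b f \<sigma> H DH P B G T N \<delta> R \<rho> x0
     \<le> ennreal (jump_const (real CARD('d)) L Lam K (Cq 1) (Cq 2) T * h *
          ((\<delta> / h)\<^sup>2 + (h powr (- 1 / 2) * real Mq powr (- 1 / real CARD('d)))\<^sup>2))"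
proof -
  define D c where "D = 2 * (real CARD('d))\<^sup>2"
    and "c = 2 * (\<bar>Lam\<bar> * (1 + u_bound (real CARD('d)) L Lam K (Cq 1) (Cq 2) T))\<^sup>2 * (Cq 2)\<^sup>2"
  define m where "m = real Mq powr (- 1 / real CARD('d))"
  have nonneg: "0 \<le> D" "0 \<le> c" "0 \<le> D * \<delta>\<^sup>2 + c * h * m\<^sup>2"
    using h_pos unfolding D_def c_def by (intro add_nonneg_nonneg mult_nonneg_nonneg; simp)+
  have "jump_sum b f \<sigma> H DH P B G T N \<delta> R \<rho> x0 \<le> (\<Sum>i<N. ennreal (D * \<delta>\<^sup>2 + c * h * m\<^sup>2))"
    unfolding jump_sum_def using jump_expectation_le
    by (intro sum_mono) (simp add: D_def c_def m_def power_mult_distrib mult_ac)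
  also have "\<dots> = ennreal (real N * (D * \<delta>\<^sup>2 + c * h * m\<^sup>2))"
    using nonneg by (simp add: ennreal_of_nat_eq_real_of_nat ennreal_mult)
  also have "\<dots> \<le> ennreal ((D * T + c * T + 1) * h * ((\<delta> / h)\<^sup>2 + (h powr (- 1 / 2) * m)\<^sup>2))"
  proof -
    have "real N * h = T" using N_pos by simp
    then show ?thesis
      using rescaled_error_le[OF h_pos nonneg(1,2), where N = N and \<delta> = \<delta> and m = m]
      by (intro ennreal_leI) (simp only:)
  qed
  finally show ?thesis
    by (simp add: jump_const_def D_def c_def m_def algebra_simps)
qed

end

theorem lemma6p6:
  fixes p T L Lam lam K \<alpha> :: real and Cq :: "real \<Rightarrow> real"
  assumes "p \<ge> 2" and "T > 0" and "lam > 0" and "0 < \<alpha>" and "\<alpha> < 1"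
  shows "\<exists>c C66. c > 0 \<and> C66 > 0 \<and>
    (\<forall>(b :: real^'d \<Rightarrow> real \<Rightarrow> real^'d \<Rightarrow> real^'d) f \<sigma> H DH
      (P :: 'a measure) B G (Lam_grid :: (real^'d) set) (Mq :: nat) (N :: nat) \<delta> R \<rho> x0.
      assumption_A L Lam lam K \<alpha> b f \<sigma> H DH \<longrightarrow>
      brownian_motion P B \<longrightarrow>
      Mq \<ge> 1 \<longrightarrow> finite Lam_grid \<longrightarrow> card Lam_grid = Mq \<longrightarrow>
      nearest_proj Lam_grid G \<longrightarrow> G \<in> borel_measurable borel \<longrightarrow>
      (\<forall>q\<ge>1. \<forall>k<N.
          integrable P (\<lambda>\<omega>. norm (gB G B T N k \<omega> - dB B T N k \<omega>) powr q) \<and>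
          (\<integral>\<omega>. norm (gB G B T N k \<omega> - dB B T N k \<omega>) powr q \<partial>P) powr (1 / q)
            \<le> Cq q * sqrt (T / real N) * real Mq powr (- 1 / real CARD('d))) \<longrightarrow>
      N \<ge> 1 \<longrightarrow> \<delta> > 0 \<longrightarrow> R > 0 \<longrightarrow> \<rho> \<ge> 1 \<longrightarrow>
      x0 \<in> C_i \<delta> R \<rho> 0 \<longrightarrow>
      T / real N < c \<longrightarrow> \<delta>\<^sup>2 < T / real N \<longrightarrow>
      real Mq powr (- 2 / real CARD('d)) < T / real N \<longrightarrow>
      jump_sum b f \<sigma> H DH P B G T N \<delta> R \<rho> x0
        \<le> ennreal (C66 * (T / real N) *
              ((\<delta> / (T / real N))\<^sup>2 + ((T / real N) powr (- 1 / 2) * real Mq powr (- 1 / real CARD('d)))\<^sup>2)))"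
proof (rule exI[of _ "1 :: real"], rule exI[of _ "jump_const (real CARD('d)) L Lam K (Cq 1) (Cq 2) T"],
    intro conjI allI impI)
  (* The bound holds for every h, so c = 1 will do. *)
  show "(0::real) < 1" by simp
  show "0 < jump_const (real CARD('d)) L Lam K (Cq 1) (Cq 2) T" using \<open>T > 0\<close> by (rule jump_const_pos)
qed (rule quantized_scheme.jump_sum_bound[OF quantized_scheme.intro]; use \<open>T > 0\<close> in auto)

end
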